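(* If $T\in\mathscr{E}(X)$ and $\xi$ is a coarse filter on $X$, then $\inf_{F\in\xi}\|\mathbf{1}_FT\|=\inf_{F\in\xi}\|T\mathbf{1}_F\|$, both infima being taken over measurable $F\in\xi$.
   Context: $(X,d)$ is a non-compact proper metric space, $B_x(r)=\{y:d(x,y)\le r\}$, and $\mu$ is a Radon measure with support $X$ such that $\mu(B_x(r))>0$ and $\sup_x\mu(B_x(r))<\infty$ for all $r>0$. On $L^2(X,\mu)$, $\mathbf{1}_A$ is multiplication by the characteristic function of measurable $A$. A kernel $k$ on $X\times X$ is controlled if $k(x,y)=0$ whenever $d(x,y)>r$ for some $r$; $\mathscr{E}(X)$ is the norm closure of the operators $(Op(k)f)(x)=\int k(x,y)f(y)d\mu(y)$, $k$ bounded, uniformly continuous and controlled. A filter is a nonempty family of subsets, not containing $\emptyset$, stable under finite intersections and supersets. With $F^{(r)}=\{x:\inf_{y\notin F}d(x,y)>r\}$, a filter $\xi$ is coarse if $F\in\xi\Rightarrow F^{(r)}\in\xi$ for all $r>0$. *)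

theory Defs
  imports "HOL-Analysis.Analysis"
begin

definition radon_measure :: "'a::metric_space measure \<Rightarrow> bool" where
  "radon_measure M \<longleftrightarrow>
     sets M = sets borel \<and>
     (\<forall>K. compact K \<longrightarrow> emeasure M K < \<infinity>) \<and>
     (\<forall>A\<in>sets M. emeasure M A = (INF U \<in> {U. open U \<and> A \<subseteq> U}. emeasure M U)) \<and>
     (\<forall>U. open U \<longrightarrow> emeasure M U = (SUP K \<in> {K. compact K \<and> K \<subseteq> U}. emeasure M K))"

definition full_support :: "'a::metric_space measure \<Rightarrow> bool" where
  "full_support M \<longleftrightarrow> (\<forall>U x. open U \<and> x \<in> U \<longrightarrow> emeasure M U > 0)"

definition L2 :: "'a measure \<Rightarrow> ('a \<Rightarrow> complex) set" where
  "L2 M = {f. f \<in> borel_measurable M \<and> integrable M (\<lambda>x. (cmod (f x))\<^sup>2)}"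

definition l2norm :: "'a measure \<Rightarrow> ('a \<Rightarrow> complex) \<Rightarrow> real" where
  "l2norm M f = sqrt (\<integral>x. (cmod (f x))\<^sup>2 \<partial>M)"

definition op_bound :: "'a measure \<Rightarrow> (('a \<Rightarrow> complex) \<Rightarrow> ('a \<Rightarrow> complex)) \<Rightarrow> real \<Rightarrow> bool" where
  "op_bound M S c \<longleftrightarrow> (\<forall>f\<in>L2 M. S f \<in> L2 M \<and> l2norm M (S f) \<le> c * l2norm M f)"

definition opnorm :: "'a measure \<Rightarrow> (('a \<Rightarrow> complex) \<Rightarrow> ('a \<Rightarrow> complex)) \<Rightarrow> real" where
  "opnorm M S = (SUP f \<in> {f \<in> L2 M. l2norm M f \<le> 1}. l2norm M (S f))"

definition mult_ind :: "'a set \<Rightarrow> ('a \<Rightarrow> complex) \<Rightarrow> ('a \<Rightarrow> complex)" where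
  "mult_ind A f = (\<lambda>x. indicator A x * f x)"

definition controlled_kernel :: "('a::metric_space \<Rightarrow> 'a \<Rightarrow> complex) \<Rightarrow> bool" where
  "controlled_kernel k \<longleftrightarrow> (\<exists>r. \<forall>x y. dist x y > r \<longrightarrow> k x y = 0)"

definition good_kernel :: "('a::metric_space \<Rightarrow> 'a \<Rightarrow> complex) \<Rightarrow> bool" where
  "good_kernel k \<longleftrightarrow> (\<exists>B. \<forall>x y. cmod (k x y) \<le> B) \<and>
     uniformly_continuous_on UNIV (\<lambda>(x, y). k x y) \<and> controlled_kernel k"

definition Op :: "'a measure \<Rightarrow> ('a \<Rightarrow> 'a \<Rightarrow> complex) \<Rightarrow> ('a \<Rightarrow> complex) \<Rightarrow> ('a \<Rightarrow> complex)" where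
  "Op M k f = (\<lambda>x. \<integral>y. k x y * f y \<partial>M)"

definition E_alg :: "'a::metric_space measure \<Rightarrow> (('a \<Rightarrow> complex) \<Rightarrow> ('a \<Rightarrow> complex)) set" where
  "E_alg M = {T. \<forall>\<epsilon>>0. \<exists>k. good_kernel k \<and>
                 op_bound M (\<lambda>f x. T f x - Op M k f x) \<epsilon>}"

definition set_filter :: "'a set set \<Rightarrow> bool" where
  "set_filter \<xi> \<longleftrightarrow> \<xi> \<noteq> {} \<and> {} \<notin> \<xi> \<and> (\<forall>A\<in>\<xi>. \<forall>B\<in>\<xi>. A \<inter> B \<in> \<xi>) \<and>
                     (\<forall>A\<in>\<xi>. \<forall>B. A \<subseteq> B \<longrightarrow> B \<in> \<xi>)"

text \<open>F^(r) = {x. inf_{y not in F} d(x,y) > r}, the infimum taken in the extended reals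
  (so the infimum over the empty set is +infinity).\<close>
definition inner_nbhd :: "'a::metric_space set \<Rightarrow> real \<Rightarrow> 'a set" where
  "inner_nbhd F r = {x. (INF y \<in> - F. ereal (dist x y)) > ereal r}"

definition coarse_filter :: "'a::metric_space set set \<Rightarrow> bool" where
  "coarse_filter \<xi> \<longleftrightarrow> set_filter \<xi> \<and> (\<forall>F\<in>\<xi>. \<forall>r>0. inner_nbhd F r \<in> \<xi>)"

end

theory Submission
  imports Defs
begin

text \<open>Approximate \<open>T\<close> up to \<open>\<epsilon>\<close> by an integral operator \<open>K\<close> whose kernel vanishes at
  distance \<open>> r\<close>. For \<open>F \<in> \<xi>\<close> the set \<open>G = inner_nbhd F r\<close> again lies in \<open>\<xi>\<close>, and as
  \<open>K\<close> only couples points at distance \<open>\<le> r\<close>, \<open>1\<^sub>G K = 1\<^sub>G K 1\<^sub>F\<close> and \<open>K 1\<^sub>G = 1\<^sub>F K 1\<^sub>G\<close>.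
  Hence \<open>\<parallel>1\<^sub>G T\<parallel> \<le> \<parallel>T 1\<^sub>F\<parallel> + 2\<epsilon>\<close> and \<open>\<parallel>T 1\<^sub>G\<parallel> \<le> \<parallel>1\<^sub>F T\<parallel> + \<epsilon>\<close>, which compares the two
  infima in both directions. The operator norms are genuine suprema only because \<open>T\<close> is
  bounded; this follows from a Schur test for \<open>K\<close>, using the uniform bound on the measure of
  \<open>r\<close>-balls.\<close>

lemma proper_imp_countable_dense:
  fixes x0 :: "'a::metric_space"
  assumes proper: "\<And>r. compact (cball x0 r)"
  obtains D :: "'a set" where "countable D" "\<And>x e. e > 0 \<Longrightarrow> \<exists>d\<in>D. dist x d < e"
proof -
  have cover: "\<exists>K. finite K \<and> cball x0 (real n) \<subseteq> (\<Union>c\<in>K. ball c (1 / Suc m))" for n m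
  proof -
    have cov: "cball x0 (real n) \<subseteq> (\<Union>c\<in>cball x0 (real n). ball c (1 / Suc m))"
      by (auto intro: UN_I[of _ _ _ "\<lambda>c. ball c (1 / Suc m)"])
    show ?thesis
      using compactE_image[OF proper _ cov] open_ball by metis
  qed
  define C where "C n m = (SOME K. finite K \<and> cball x0 (real n) \<subseteq> (\<Union>c\<in>K. ball c (1 / Suc m)))"
    for n m
  have C: "finite (C n m)" "cball x0 (real n) \<subseteq> (\<Union>c\<in>C n m. ball c (1 / Suc m))" for n m
    using someI_ex[OF cover[of n m]] unfolding C_def by blast+
  show ?thesis
  proof
    show "countable (\<Union>n m. C n m)" using C(1) by (simp add: countable_finite)
    fix x and e :: real assume "e > 0"
    obtain m where m: "inverse (Suc m) < e" using reals_Archimedean \<open>e > 0\<close> by blast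
    obtain n :: nat where "dist x0 x \<le> n" using real_arch_simple by blast
    then have "x \<in> cball x0 (real n)" by simp
    then obtain c where "c \<in> C n m" "dist c x < 1 / Suc m" using C(2)[of n m] by auto
    moreover from this(2) have "dist x c < e" using m by (simp add: dist_commute inverse_eq_divide)
    ultimately show "\<exists>d\<in>\<Union>n m. C n m. dist x d < e" by blast
  qed
qed

text \<open>Without separability the product of two Borel \<open>\<sigma>\<close>-algebras can miss open sets of the
  product space; a countable dense set puts them back.\<close>

lemma open_in_sets_pair_measure:
  fixes U :: "('a::metric_space \<times> 'b::metric_space) set"
  assumes M: "sets M = sets borel" and N: "sets N = sets borel"
    and D: "countable (D :: 'a set)" "\<And>x e. e > 0 \<Longrightarrow> \<exists>d\<in>D. dist x d < e"
    and D': "countable (D' :: 'b set)" "\<And>y e. e > 0 \<Longrightarrow> \<exists>d\<in>D'. dist y d < e"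
    and U: "open U"
  shows "U \<in> sets (M \<Otimes>\<^sub>M N)"
proof -
  define R :: "('a \<times> 'b \<times> real) set"
    where "R = {(d, d', q). d \<in> D \<and> d' \<in> D' \<and> q \<in> \<rat> \<and> ball d q \<times> ball d' q \<subseteq> U}"
  have "R \<subseteq> D \<times> D' \<times> \<rat>" unfolding R_def by auto
  then have "countable R"
    using D(1) D'(1) countable_rat by (metis countable_SIGMA countable_subset)
  have U_eq: "U = (\<Union>(d, d', q)\<in>R. ball d q \<times> ball d' q)"
  proof
    show "(\<Union>(d, d', q)\<in>R. ball d q \<times> ball d' q) \<subseteq> U" unfolding R_def by blast
    show "U \<subseteq> (\<Union>(d, d', q)\<in>R. ball d q \<times> ball d' q)"
    proof
      fix p assume "p \<in> U"
      obtain x y where p: "p = (x, y)" by fastforce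
      obtain A B where AB: "open A" "open B" "p \<in> A \<times> B" "A \<times> B \<subseteq> U"
        using open_prod_elim[OF U \<open>p \<in> U\<close>] by blast
      have "x \<in> A" "y \<in> B" using AB p by auto
      then obtain e1 e2 where e12: "e1 > 0" "ball x e1 \<subseteq> A" "e2 > 0" "ball y e2 \<subseteq> B"
        using AB openE by metis
      define e where "e = min e1 e2"
      obtain q where q: "q \<in> \<rat>" "0 < q" "q < e / 2"
        using Rats_dense_in_real[of 0 "e / 2"] e12 by (auto simp: e_def)
      obtain d d' where d: "d \<in> D" "dist x d < q" and d': "d' \<in> D'" "dist y d' < q"
        using D(2) D'(2) q by blast
      have "ball d q \<subseteq> ball x e1"
      proof
        fix z assume "z \<in> ball d q"
        then show "z \<in> ball x e1" using d q dist_triangle[of x z d] by (simp add: e_def)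
      qed
      moreover have "ball d' q \<subseteq> ball y e2"
      proof
        fix z assume "z \<in> ball d' q"
        then show "z \<in> ball y e2" using d' q dist_triangle[of y z d'] by (simp add: e_def)
      qed
      ultimately have "(d, d', q) \<in> R" unfolding R_def using d d' q e12 AB by blast
      moreover have "p \<in> ball d q \<times> ball d' q" using p d d' by (simp add: dist_commute)
      ultimately show "p \<in> (\<Union>(d, d', q)\<in>R. ball d q \<times> ball d' q)" by blast
    qed
  qed
  have "(\<lambda>(d, d', q). ball d q \<times> ball d' q) ` R \<subseteq> sets (M \<Otimes>\<^sub>M N)"
    using M N by (auto intro!: pair_measureI simp del: mem_ball)
  then show ?thesis
    unfolding U_eq using \<open>countable R\<close> by (intro sets.countable_Union) simp_all
qed

lemma borel_measurable_pair_continuous: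
  fixes h :: "'a::metric_space \<times> 'b::metric_space \<Rightarrow> 'c::topological_space"
  assumes M: "sets M = sets borel" and N: "sets N = sets borel"
    and D: "countable (D :: 'a set)" "\<And>x e. e > 0 \<Longrightarrow> \<exists>d\<in>D. dist x d < e"
    and D': "countable (D' :: 'b set)" "\<And>y e. e > 0 \<Longrightarrow> \<exists>d\<in>D'. dist y d < e"
    and h: "continuous_on UNIV h"
  shows "h \<in> borel_measurable (M \<Otimes>\<^sub>M N)"
proof (rule borel_measurableI)
  fix S :: "'c set" assume "open S"
  then have "h -` S \<in> sets (M \<Otimes>\<^sub>M N)"
    using open_in_sets_pair_measure[OF M N D D'] open_vimage[OF _ h] by simp
  moreover have "space (M \<Otimes>\<^sub>M N) = UNIV"
    using sets_eq_imp_space_eq[OF M] sets_eq_imp_space_eq[OF N] by (simp add: space_pair_measure)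
  ultimately show "h -` S \<inter> space (M \<Otimes>\<^sub>M N) \<in> sets (M \<Otimes>\<^sub>M N)" by simp
qed

lemma dist_le_in_sets_pair_measure:
  fixes M :: "'a::metric_space measure"
  assumes M: "sets M = sets borel"
    and D: "countable (D :: 'a set)" "\<And>x e. e > 0 \<Longrightarrow> \<exists>d\<in>D. dist x d < e"
  shows "{p. dist (fst p) (snd p) \<le> r} \<in> sets (M \<Otimes>\<^sub>M M)"
proof -
  have "open (- {p::'a \<times> 'a. dist (fst p) (snd p) \<le> r})"
    by (simp add: Compl_eq open_Collect_less continuous_on_dist continuous_on_fst continuous_on_snd not_le)
  then have "- {p::'a \<times> 'a. dist (fst p) (snd p) \<le> r} \<in> sets (M \<Otimes>\<^sub>M M)"
    using open_in_sets_pair_measure[OF M M D D] by blast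
  from sets.compl_sets[OF this] show ?thesis
    using sets_eq_imp_space_eq[OF M] by (simp add: space_pair_measure)
qed

lemma sigma_finite_measure_if_cballs_finite:
  fixes x0 :: "'a::metric_space"
  assumes M: "sets M = sets borel" and fin: "\<And>r. emeasure M (cball x0 r) < \<infinity>"
  shows "sigma_finite_measure M"
proof
  have "(\<Union>n::nat. cball x0 (real n)) = space M"
    using sets_eq_imp_space_eq[OF M] real_arch_simple by (auto simp: mem_cball)
  then show "\<exists>A. countable A \<and> A \<subseteq> sets M \<and> \<Union> A = space M \<and> (\<forall>a\<in>A. emeasure M a \<noteq> \<infinity>)"
    using M fin[THEN less_imp_neq] by (intro exI[of _ "range (\<lambda>n::nat. cball x0 (real n))"]) auto
qed

lemma l2norm_nonneg: "0 \<le> l2norm M f"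
  unfolding l2norm_def by (simp add: integral_nonneg)

lemma l2norm_power2: "(l2norm M f)\<^sup>2 = (\<integral>x. (cmod (f x))\<^sup>2 \<partial>M)"
  unfolding l2norm_def by (simp add: integral_nonneg)

lemma zero_in_L2: "(\<lambda>x. 0) \<in> L2 M"
  unfolding L2_def by simp

lemma l2norm_zero: "l2norm M (\<lambda>x. 0) = 0"
  unfolding l2norm_def by simp

lemma nn_integral_L2:
  assumes "f \<in> L2 M"
  shows "(\<integral>\<^sup>+ x. ennreal ((cmod (f x))\<^sup>2) \<partial>M) = ennreal ((l2norm M f)\<^sup>2)"
  using assms unfolding L2_def l2norm_power2 by (simp add: nn_integral_eq_integral)

lemma L2_if_nn_integral_le:
  assumes [measurable]: "h \<in> borel_measurable M"
    and le: "(\<integral>\<^sup>+ x. ennreal ((cmod (h x))\<^sup>2) \<partial>M) \<le> ennreal (c\<^sup>2)" and "0 \<le> c"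
  shows "h \<in> L2 M" and "l2norm M h \<le> c"
proof -
  have "(\<integral>\<^sup>+ x. ennreal (norm ((cmod (h x))\<^sup>2)) \<partial>M) < \<infinity>"
    using le_less_trans[OF le ennreal_less_top] by simp
  then have "integrable M (\<lambda>x. (cmod (h x))\<^sup>2)"
    by (intro integrableI_bounded) auto
  then show "h \<in> L2 M" unfolding L2_def by simp
  have "(l2norm M h)\<^sup>2 = enn2real (\<integral>\<^sup>+ x. ennreal ((cmod (h x))\<^sup>2) \<partial>M)"
    unfolding l2norm_power2 by (rule integral_eq_nn_integral) auto
  also have "\<dots> \<le> c\<^sup>2"
    using enn2real_mono[OF le ennreal_less_top] \<open>0 \<le> c\<close> by simp
  finally show "l2norm M h \<le> c"
    using \<open>0 \<le> c\<close> by (rule power2_le_imp_le)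
qed

lemma L2_cauchy_schwarz:
  assumes f: "f \<in> L2 M" and g: "g \<in> L2 M"
  shows "integrable M (\<lambda>x. cmod (f x) * cmod (g x))"
    and "(\<integral>x. cmod (f x) * cmod (g x) \<partial>M) \<le> l2norm M f * l2norm M g"
proof -
  have [measurable]: "f \<in> borel_measurable M" "g \<in> borel_measurable M"
    using f g by (simp_all add: L2_def)
  have "integrable M (\<lambda>x. (cmod (f x))\<^sup>2 + (cmod (g x))\<^sup>2)"
    using f g by (simp add: L2_def)
  then show int: "integrable M (\<lambda>x. cmod (f x) * cmod (g x))"
  proof (rule Bochner_Integration.integrable_bound)
    have "cmod (f x) * cmod (g x) \<le> (cmod (f x))\<^sup>2 + (cmod (g x))\<^sup>2" for x
      using sum_squares_bound[of "cmod (f x)" "cmod (g x)"]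
        mult_nonneg_nonneg[OF norm_ge_zero norm_ge_zero, of "f x" "g x"] by linarith
    then show "AE x in M. norm (cmod (f x) * cmod (g x)) \<le> norm ((cmod (f x))\<^sup>2 + (cmod (g x))\<^sup>2)"
      by simp
  qed measurable
  have "(\<integral>\<^sup>+ x. ennreal (cmod (f x)) * ennreal (cmod (g x)) \<partial>M)
      = ennreal (\<integral>x. cmod (f x) * cmod (g x) \<partial>M)"
    using nn_integral_eq_integral[OF int] by (simp add: ennreal_mult)
  then have "ennreal ((\<integral>x. cmod (f x) * cmod (g x) \<partial>M)\<^sup>2)
      = (\<integral>\<^sup>+ x. ennreal (cmod (f x)) * ennreal (cmod (g x)) \<partial>M)\<^sup>2"
    by (simp add: ennreal_power integral_nonneg)
  also have "\<dots> \<le> (\<integral>\<^sup>+ x. ennreal (cmod (f x)) ^ 2 \<partial>M) * (\<integral>\<^sup>+ x. ennreal (cmod (g x)) ^ 2 \<partial>M)"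
    by (rule Cauchy_Schwarz_nn_integral) measurable
  also have "\<dots> = ennreal ((l2norm M f * l2norm M g)\<^sup>2)"
    using nn_integral_L2[OF f] nn_integral_L2[OF g]
    by (simp add: ennreal_power ennreal_mult power_mult_distrib)
  finally have "(\<integral>x. cmod (f x) * cmod (g x) \<partial>M)\<^sup>2 \<le> (l2norm M f * l2norm M g)\<^sup>2"
    by (simp add: ennreal_le_iff)
  then show "(\<integral>x. cmod (f x) * cmod (g x) \<partial>M) \<le> l2norm M f * l2norm M g"
    by (rule power2_le_imp_le) (simp add: l2norm_nonneg)
qed

lemma L2_add:
  assumes f: "f \<in> L2 M" and g: "g \<in> L2 M"
  shows "(\<lambda>x. f x + g x) \<in> L2 M" and "l2norm M (\<lambda>x. f x + g x) \<le> l2norm M f + l2norm M g"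
proof -
  have [measurable]: "f \<in> borel_measurable M" "g \<in> borel_measurable M"
    and fi: "integrable M (\<lambda>x. (cmod (f x))\<^sup>2)" and gi: "integrable M (\<lambda>x. (cmod (g x))\<^sup>2)"
    using f g by (simp_all add: L2_def)
  note fgi = L2_cauchy_schwarz(1)[OF f g]
  define b where "b x = (cmod (f x))\<^sup>2 + 2 * (cmod (f x) * cmod (g x)) + (cmod (g x))\<^sup>2" for x
  have bi: "integrable M b"
    unfolding b_def by (intro Bochner_Integration.integrable_add integrable_mult_right fi gi fgi)
  have pointwise: "(cmod (f x + g x))\<^sup>2 \<le> b x" for x
  proof -
    have "(cmod (f x + g x))\<^sup>2 \<le> (cmod (f x) + cmod (g x))\<^sup>2"
      by (rule power_mono[OF norm_triangle_ineq norm_ge_zero])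
    then show ?thesis unfolding b_def by (simp add: power2_eq_square algebra_simps)
  qed
  have si: "integrable M (\<lambda>x. (cmod (f x + g x))\<^sup>2)"
    using bi by (rule Bochner_Integration.integrable_bound) (auto intro!: AE_I2 order_trans[OF pointwise])
  then show "(\<lambda>x. f x + g x) \<in> L2 M" unfolding L2_def by simp
  have "(l2norm M (\<lambda>x. f x + g x))\<^sup>2 \<le> (\<integral>x. b x \<partial>M)"
    unfolding l2norm_power2 using si bi pointwise by (rule integral_mono)
  also have "\<dots> = (\<integral>x. (cmod (f x))\<^sup>2 + 2 * (cmod (f x) * cmod (g x)) \<partial>M) + (l2norm M g)\<^sup>2"
    unfolding b_def l2norm_power2
    by (rule Bochner_Integration.integral_add) (intro Bochner_Integration.integrable_add integrable_mult_right fi gi fgi)+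
  also have "(\<integral>x. (cmod (f x))\<^sup>2 + 2 * (cmod (f x) * cmod (g x)) \<partial>M)
      = (l2norm M f)\<^sup>2 + 2 * (\<integral>x. cmod (f x) * cmod (g x) \<partial>M)"
    unfolding l2norm_power2 using fi fgi by simp
  also have "(l2norm M f)\<^sup>2 + 2 * (\<integral>x. cmod (f x) * cmod (g x) \<partial>M) + (l2norm M g)\<^sup>2
      \<le> (l2norm M f + l2norm M g)\<^sup>2"
    using L2_cauchy_schwarz(2)[OF f g] by (simp add: power2_eq_square algebra_simps)
  finally show "l2norm M (\<lambda>x. f x + g x) \<le> l2norm M f + l2norm M g"
    by (rule power2_le_imp_le) (simp add: l2norm_nonneg)
qed

lemma L2_uminus:
  assumes "g \<in> L2 M"
  shows "(\<lambda>x. - g x) \<in> L2 M" and "l2norm M (\<lambda>x. - g x) = l2norm M g"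
  using assms unfolding L2_def l2norm_def by (simp_all add: borel_measurable_uminus)

lemma L2_mult_ind:
  assumes A: "A \<in> sets M" and f: "f \<in> L2 M"
  shows "mult_ind A f \<in> L2 M" and "l2norm M (mult_ind A f) \<le> l2norm M f"
proof -
  have [measurable]: "f \<in> borel_measurable M" and fi: "integrable M (\<lambda>x. (cmod (f x))\<^sup>2)"
    using f by (simp_all add: L2_def)
  have pointwise: "(cmod (mult_ind A f x))\<^sup>2 \<le> (cmod (f x))\<^sup>2" for x
    by (simp add: mult_ind_def indicator_def)
  have mm[measurable]: "mult_ind A f \<in> borel_measurable M"
    unfolding mult_ind_def using A by measurable
  have mi: "integrable M (\<lambda>x. (cmod (mult_ind A f x))\<^sup>2)"
    using fi
  proof (rule Bochner_Integration.integrable_bound)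
    show "AE x in M. norm ((cmod (mult_ind A f x))\<^sup>2) \<le> norm ((cmod (f x))\<^sup>2)"
      using pointwise by (intro AE_I2) simp
  qed measurable
  show "mult_ind A f \<in> L2 M" unfolding L2_def using mi by simp
  show "l2norm M (mult_ind A f) \<le> l2norm M f"
    unfolding l2norm_def using mi fi pointwise by (intro real_sqrt_le_mono integral_mono)
qed

lemma l2norm_le_opnorm:
  assumes "op_bound M S c" and "f \<in> L2 M" and "l2norm M f \<le> 1"
  shows "l2norm M (S f) \<le> opnorm M S"
proof -
  have "l2norm M (S h) \<le> \<bar>c\<bar>" if "h \<in> L2 M" "l2norm M h \<le> 1" for h
  proof -
    have "l2norm M (S h) \<le> c * l2norm M h" using assms(1) that(1) unfolding op_bound_def by blast
    also have "\<dots> \<le> \<bar>c\<bar> * l2norm M h"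
      using l2norm_nonneg[of M h] by (intro mult_right_mono) simp_all
    also have "\<dots> \<le> \<bar>c\<bar>"
      using that(2) by (intro mult_left_le) simp_all
    finally show ?thesis .
  qed
  then have "bdd_above ((\<lambda>f. l2norm M (S f)) ` {f \<in> L2 M. l2norm M f \<le> 1})"
    by (intro bdd_aboveI2) blast
  then show ?thesis unfolding opnorm_def by (rule cSUP_upper[rotated]) (use assms(2,3) in blast)
qed

lemma opnorm_le:
  assumes "\<And>f. f \<in> L2 M \<Longrightarrow> l2norm M f \<le> 1 \<Longrightarrow> l2norm M (S f) \<le> b"
  shows "opnorm M S \<le> b"
  unfolding opnorm_def using assms zero_in_L2[of M] l2norm_zero[of M] by (intro cSUP_least) auto

lemma opnorm_nonneg:
  assumes "op_bound M S c"
  shows "0 \<le> opnorm M S"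
proof -
  have "l2norm M (S (\<lambda>x. 0)) \<le> opnorm M S"
    using l2norm_le_opnorm[OF assms zero_in_L2] by (simp add: l2norm_zero)
  then show ?thesis using l2norm_nonneg[of M "S (\<lambda>x. 0)"] by linarith
qed

lemma op_bound_add:
  assumes "op_bound M S a" and "op_bound M R b"
  shows "op_bound M (\<lambda>f x. S f x + R f x) (a + b)"
  unfolding op_bound_def
proof (intro ballI conjI)
  fix f assume f: "f \<in> L2 M"
  have "S f \<in> L2 M" "R f \<in> L2 M" "l2norm M (S f) \<le> a * l2norm M f" "l2norm M (R f) \<le> b * l2norm M f"
    using assms f unfolding op_bound_def by auto
  then show "(\<lambda>x. S f x + R f x) \<in> L2 M" "l2norm M (\<lambda>x. S f x + R f x) \<le> (a + b) * l2norm M f"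
    using L2_add[of "S f" M "R f"] by (auto simp: distrib_right)
qed

lemma op_bound_uminus:
  assumes "op_bound M S a"
  shows "op_bound M (\<lambda>f x. - S f x) a"
  using assms unfolding op_bound_def by (simp add: L2_uminus)

lemma op_bound_diff:
  assumes "op_bound M S a" and "op_bound M R b"
  shows "op_bound M (\<lambda>f x. S f x - R f x) (a + b)"
  using op_bound_add[OF assms(1) op_bound_uminus[OF assms(2)]] by simp

lemma op_bound_mult_ind_left:
  assumes "op_bound M S c" and "A \<in> sets M"
  shows "op_bound M (\<lambda>f. mult_ind A (S f)) c"
  unfolding op_bound_def
proof (intro ballI conjI)
  fix f assume "f \<in> L2 M"
  then have Sf: "S f \<in> L2 M" "l2norm M (S f) \<le> c * l2norm M f"
    using assms(1) unfolding op_bound_def by auto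
  then show "mult_ind A (S f) \<in> L2 M" "l2norm M (mult_ind A (S f)) \<le> c * l2norm M f"
    using L2_mult_ind[OF assms(2) Sf(1)] by linarith+
qed

lemma op_bound_mult_ind_right:
  assumes "op_bound M S c" and "0 \<le> c" and "A \<in> sets M"
  shows "op_bound M (\<lambda>f. S (mult_ind A f)) c"
  unfolding op_bound_def
proof (intro ballI conjI)
  fix f assume f: "f \<in> L2 M"
  then have "mult_ind A f \<in> L2 M" "l2norm M (mult_ind A f) \<le> l2norm M f"
    using L2_mult_ind assms(3) by blast+
  moreover from this(2) have "c * l2norm M (mult_ind A f) \<le> c * l2norm M f"
    using assms(2) by (rule mult_left_mono)
  ultimately show "S (mult_ind A f) \<in> L2 M" "l2norm M (S (mult_ind A f)) \<le> c * l2norm M f"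
    using assms(1) unfolding op_bound_def by fastforce+
qed

lemma opnorm_mult_ind_left_le:
  assumes "op_bound M S c" and "A \<in> sets M"
  shows "opnorm M (\<lambda>f. mult_ind A (S f)) \<le> opnorm M S"
proof (rule opnorm_le)
  fix f assume "f \<in> L2 M" "l2norm M f \<le> 1"
  moreover from this have "S f \<in> L2 M" using assms(1) unfolding op_bound_def by blast
  ultimately show "l2norm M (mult_ind A (S f)) \<le> opnorm M S"
    using L2_mult_ind(2)[OF assms(2)] l2norm_le_opnorm[OF assms(1)] order_trans by blast
qed

lemma opnorm_mult_ind_right_le:
  assumes "op_bound M S c" and "A \<in> sets M"
  shows "opnorm M (\<lambda>f. S (mult_ind A f)) \<le> opnorm M S"
proof (rule opnorm_le)
  fix f assume "f \<in> L2 M" "l2norm M f \<le> 1"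
  then show "l2norm M (S (mult_ind A f)) \<le> opnorm M S"
    using L2_mult_ind[OF assms(2)] l2norm_le_opnorm[OF assms(1)] order_trans by blast
qed

lemma opnorm_le_opnorm_add:
  assumes "op_bound M (\<lambda>f x. S f x - R f x) e" and "op_bound M R c" and "0 \<le> e"
  shows "opnorm M S \<le> opnorm M R + e"
proof (rule opnorm_le)
  fix f assume f: "f \<in> L2 M" "l2norm M f \<le> 1"
  have "e * l2norm M f \<le> e" using f(2) assms(3) by (rule mult_left_le)
  then have d: "(\<lambda>x. S f x - R f x) \<in> L2 M" "l2norm M (\<lambda>x. S f x - R f x) \<le> e"
    using assms(1) f(1) unfolding op_bound_def by fastforce+
  have "R f \<in> L2 M" using assms(2) f(1) unfolding op_bound_def by blast
  then have "l2norm M (\<lambda>x. (S f x - R f x) + R f x) \<le> e + opnorm M R"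
    using L2_add(2)[OF d(1)] d(2) l2norm_le_opnorm[OF assms(2) f] by fastforce
  then show "l2norm M (S f) \<le> opnorm M R + e" by simp
qed

section \<open>Schur test for kernel operators\<close>

lemma Op_norm_le_nn_integral:
  fixes M :: "'a::metric_space measure"
  assumes M: "sets M = sets borel" and [measurable]: "f \<in> borel_measurable M"
    and kB: "\<And>x y. cmod (k x y) \<le> B" and kr: "\<And>x y. dist x y > r \<Longrightarrow> k x y = 0"
  shows "ennreal (cmod (Op M k f x))
    \<le> ennreal B * (\<integral>\<^sup>+ y. indicator (cball x r) y * ennreal (cmod (f y)) \<partial>M)"
proof -
  have [measurable]: "cball x r \<in> sets M" using M by simp
  have "0 \<le> B" using norm_ge_zero[of "k x x"] kB[of x x] by linarith
  have "ennreal (cmod (Op M k f x)) \<le> (\<integral>\<^sup>+ y. ennreal (cmod (k x y * f y)) \<partial>M)"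
    unfolding Op_def
    by (cases "integrable M (\<lambda>y. k x y * f y)")
      (simp_all add: integral_norm_bound_ennreal not_integrable_integral_eq)
  also have "\<dots> \<le> (\<integral>\<^sup>+ y. ennreal B * (indicator (cball x r) y * ennreal (cmod (f y))) \<partial>M)"
  proof (rule nn_integral_mono)
    fix y
    show "ennreal (cmod (k x y * f y)) \<le> ennreal B * (indicator (cball x r) y * ennreal (cmod (f y)))"
    proof (cases "dist x y \<le> r")
      case True
      have "cmod (k x y * f y) \<le> B * cmod (f y)"
        unfolding norm_mult using kB by (rule mult_right_mono) simp
      then show ?thesis using True \<open>0 \<le> B\<close> by (simp add: ennreal_mult[symmetric])
    next
      case False
      then show ?thesis using kr by simp
    qed
  qed
  also have "\<dots> = ennreal B * (\<integral>\<^sup>+ y. indicator (cball x r) y * ennreal (cmod (f y)) \<partial>M)"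
    by (rule nn_integral_cmult) measurable
  finally show ?thesis .
qed

lemma nn_integral_indicator_power2_le:
  fixes g :: "'a \<Rightarrow> ennreal"
  assumes [measurable]: "A \<in> sets M" "g \<in> borel_measurable M"
  shows "(\<integral>\<^sup>+ y. indicator A y * g y \<partial>M)\<^sup>2 \<le> emeasure M A * (\<integral>\<^sup>+ y. indicator A y * g y ^ 2 \<partial>M)"
proof -
  have "(\<integral>\<^sup>+ y. indicator A y * (indicator A y * g y) \<partial>M)\<^sup>2
      \<le> (\<integral>\<^sup>+ y. indicator A y ^ 2 \<partial>M) * (\<integral>\<^sup>+ y. (indicator A y * g y) ^ 2 \<partial>M)"
    by (rule Cauchy_Schwarz_nn_integral) measurable
  moreover have "(\<lambda>y. indicator A y * (indicator A y * g y)) = (\<lambda>y. indicator A y * g y)"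
    "(\<lambda>y. indicator A y ^ 2) = (indicator A :: 'a \<Rightarrow> ennreal)"
    "(\<lambda>y. (indicator A y * g y) ^ 2) = (\<lambda>y. indicator A y * g y ^ 2)"
    by (simp_all add: fun_eq_iff indicator_def)
  ultimately show ?thesis by simp
qed

lemma nn_integral_cball_le:
  fixes M :: "'a::metric_space measure" and h :: "'a \<Rightarrow> ennreal"
  assumes M: "sets M = sets borel" and "sigma_finite_measure M"
    and E[measurable]: "{p. dist (fst p) (snd p) \<le> r} \<in> sets (M \<Otimes>\<^sub>M M)"
    and [measurable]: "h \<in> borel_measurable M"
    and balls: "\<And>x. emeasure M (cball x r) \<le> S"
  shows "(\<integral>\<^sup>+ x. (\<integral>\<^sup>+ y. indicator (cball x r) y * h y \<partial>M) \<partial>M) \<le> S * (\<integral>\<^sup>+ y. h y \<partial>M)"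
proof -
  interpret pair_sigma_finite M M by (simp add: pair_sigma_finite_def assms(2))
  define E where "E = {p::'a \<times> 'a. dist (fst p) (snd p) \<le> r}"
  have ind: "indicator (cball x r) y = (indicator E (x, y) :: ennreal)"
    "indicator (cball y r) x = (indicator E (x, y) :: ennreal)" for x y
    by (simp_all add: E_def indicator_def dist_commute)
  have "(\<lambda>p. indicator E p * h (snd p)) \<in> borel_measurable (M \<Otimes>\<^sub>M M)"
    unfolding E_def by measurable
  then have "(\<integral>\<^sup>+ x. (\<integral>\<^sup>+ y. indicator E (x, y) * h y \<partial>M) \<partial>M)
      = (\<integral>\<^sup>+ y. (\<integral>\<^sup>+ x. indicator E (x, y) * h y \<partial>M) \<partial>M)"
    by (intro Fubini'[symmetric]) (simp add: split_beta')
  also have "\<dots> = (\<integral>\<^sup>+ y. h y * emeasure M (cball y r) \<partial>M)"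
    using M by (simp add: ind(2)[symmetric] mult.commute[of _ "h _"] nn_integral_cmult_indicator)
  also have "\<dots> \<le> (\<integral>\<^sup>+ y. S * h y \<partial>M)"
    by (intro nn_integral_mono) (simp add: mult.commute[of "h _"] mult_right_mono balls)
  also have "\<dots> = S * (\<integral>\<^sup>+ y. h y \<partial>M)"
    by (rule nn_integral_cmult) measurable
  finally show ?thesis by (simp add: ind(1))
qed

lemma Op_norm_power2_le:
  fixes M :: "'a::metric_space measure"
  assumes M: "sets M = sets borel" and [measurable]: "f \<in> borel_measurable M"
    and kB: "\<And>x y. cmod (k x y) \<le> B" and kr: "\<And>x y. dist x y > r \<Longrightarrow> k x y = 0"
    and balls: "\<And>x. emeasure M (cball x r) \<le> ennreal S" and "0 \<le> S"
  shows "ennreal ((cmod (Op M k f x))\<^sup>2)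
    \<le> ennreal (B\<^sup>2 * S) * (\<integral>\<^sup>+ y. indicator (cball x r) y * ennreal (cmod (f y)) ^ 2 \<partial>M)"
proof -
  define g where "g y = ennreal (cmod (f y))" for y
  have [measurable]: "g \<in> borel_measurable M" unfolding g_def by measurable
  have "0 \<le> B" using norm_ge_zero[of "k x x"] kB[of x x] by linarith
  have "ennreal ((cmod (Op M k f x))\<^sup>2) = (ennreal (cmod (Op M k f x)))\<^sup>2"
    by (simp add: ennreal_power)
  also have "\<dots> \<le> (ennreal B * (\<integral>\<^sup>+ y. indicator (cball x r) y * g y \<partial>M))\<^sup>2"
    unfolding g_def by (intro power_mono Op_norm_le_nn_integral[OF M _ kB kr]) simp_all
  also have "\<dots> \<le> ennreal (B\<^sup>2) * (emeasure M (cball x r) * (\<integral>\<^sup>+ y. indicator (cball x r) y * g y ^ 2 \<partial>M))"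
    using nn_integral_indicator_power2_le[of "cball x r" M g] M \<open>0 \<le> B\<close>
    by (simp add: power_mult_distrib ennreal_power mult_left_mono)
  also have "\<dots> \<le> ennreal (B\<^sup>2) * (ennreal S * (\<integral>\<^sup>+ y. indicator (cball x r) y * g y ^ 2 \<partial>M))"
    by (intro mult_left_mono mult_right_mono balls) simp_all
  finally show ?thesis using \<open>0 \<le> S\<close> unfolding g_def by (simp add: ennreal_mult mult.assoc)
qed

lemma op_bound_Op:
  fixes M :: "'a::metric_space measure"
  assumes M: "sets M = sets borel" and sf: "sigma_finite_measure M"
    and D: "countable (D :: 'a set)" "\<And>x e. e > 0 \<Longrightarrow> \<exists>d\<in>D. dist x d < e"
    and kB: "\<And>x y. cmod (k x y) \<le> B" and kc: "continuous_on UNIV (\<lambda>(x, y). k x y)"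
    and kr: "\<And>x y. dist x y > r \<Longrightarrow> k x y = 0"
    and balls: "\<And>x. emeasure M (cball x r) \<le> ennreal S" and "0 \<le> S"
  shows "op_bound M (Op M k) (B * S)"
  unfolding op_bound_def
proof (intro ballI conjI)
  interpret sigma_finite_measure M by (rule sf)
  fix f assume f: "f \<in> L2 M"
  have [measurable]: "f \<in> borel_measurable M" using f by (simp add: L2_def)
  have "0 \<le> B" using norm_ge_zero[of "k undefined undefined"] kB by (rule order_trans)
  have "(\<lambda>(x, y). k x y) \<in> borel_measurable (M \<Otimes>\<^sub>M M)"
    by (rule borel_measurable_pair_continuous[OF M M D D kc])
  then have [measurable]: "(\<lambda>p. k (fst p) (snd p)) \<in> borel_measurable (M \<Otimes>\<^sub>M M)"
    by (simp add: split_beta')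
  have Op_measurable[measurable]: "Op M k f \<in> borel_measurable M"
    unfolding Op_def by measurable
  have E[measurable]: "{p. dist (fst p) (snd p) \<le> r} \<in> sets (M \<Otimes>\<^sub>M M)"
    by (rule dist_le_in_sets_pair_measure[OF M D])
  define g where "g y = ennreal (cmod (f y))" for y
  define P where "P x = (\<integral>\<^sup>+ y. indicator (cball x r) y * g y ^ 2 \<partial>M)" for x
  have "(\<lambda>p. indicator {p. dist (fst p) (snd p) \<le> r} p * g (snd p) ^ 2) \<in> borel_measurable (M \<Otimes>\<^sub>M M)"
    unfolding g_def by measurable
  then have [measurable]: "P \<in> borel_measurable M"
    unfolding P_def by (intro borel_measurable_nn_integral) (simp add: split_beta' indicator_def mem_cball)
  have "(\<integral>\<^sup>+ x. ennreal ((cmod (Op M k f x))\<^sup>2) \<partial>M) \<le> (\<integral>\<^sup>+ x. ennreal (B\<^sup>2 * S) * P x \<partial>M)"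
    unfolding P_def g_def by (intro nn_integral_mono Op_norm_power2_le[OF M _ kB kr balls \<open>0 \<le> S\<close>]) simp
  also have "\<dots> = ennreal (B\<^sup>2 * S) * (\<integral>\<^sup>+ x. P x \<partial>M)"
    by (rule nn_integral_cmult) measurable
  also have "\<dots> \<le> ennreal (B\<^sup>2 * S) * (ennreal S * (\<integral>\<^sup>+ y. g y ^ 2 \<partial>M))"
    unfolding P_def g_def by (intro mult_left_mono nn_integral_cball_le[OF M sf E] balls) simp_all
  also have "\<dots> = ennreal ((B * S * l2norm M f)\<^sup>2)"
    using nn_integral_L2[OF f] \<open>0 \<le> S\<close> \<open>0 \<le> B\<close> l2norm_nonneg[of M f]
    unfolding g_def by (simp add: ennreal_power ennreal_mult power2_eq_square mult_ac)
  finally have total: "(\<integral>\<^sup>+ x. ennreal ((cmod (Op M k f x))\<^sup>2) \<partial>M) \<le> ennreal ((B * S * l2norm M f)\<^sup>2)" .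
  have "0 \<le> B * S * l2norm M f" using \<open>0 \<le> B\<close> \<open>0 \<le> S\<close> l2norm_nonneg[of M f] by simp
  then show "Op M k f \<in> L2 M" "l2norm M (Op M k f) \<le> B * S * l2norm M f"
    using L2_if_nn_integral_le[OF Op_measurable total] by simp_all
qed

section \<open>Finite propagation and inner neighbourhoods\<close>

lemma cball_subset_of_mem_inner_nbhd:
  assumes "x \<in> inner_nbhd F r"
  shows "cball x r \<subseteq> F"
proof
  fix y assume y: "y \<in> cball x r"
  show "y \<in> F"
  proof (rule ccontr)
    assume "y \<notin> F"
    then have "(INF z \<in> - F. ereal (dist x z)) \<le> ereal r"
      using y by (intro INF_lower2[of y]) auto
    then show False using assms unfolding inner_nbhd_def by simp
  qed
qed

lemma open_inner_nbhd: "open (inner_nbhd F r)"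
proof (rule openI)
  fix x assume "x \<in> inner_nbhd F r"
  then obtain s where s: "ereal r < ereal s" "ereal s < (INF y \<in> - F. ereal (dist x y))"
    unfolding inner_nbhd_def using ereal_dense2 by blast
  have "ball x (s - r) \<subseteq> inner_nbhd F r"
  proof
    fix x' assume "x' \<in> ball x (s - r)"
    then have "ereal r < ereal (s - dist x x')" by simp
    also have "\<dots> \<le> (INF y \<in> - F. ereal (dist x' y))"
    proof (rule INF_greatest)
      fix y assume "y \<in> - F"
      then have "ereal s \<le> ereal (dist x y)"
        using order_trans[OF less_imp_le[OF s(2)] INF_lower] by blast
      then show "ereal (s - dist x x') \<le> ereal (dist x' y)"
        using dist_triangle[of x y x'] by simp
    qed
    finally show "x' \<in> inner_nbhd F r" unfolding inner_nbhd_def by simp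
  qed
  moreover have "s - r > 0" using s(1) by simp
  ultimately show "\<exists>e>0. ball x e \<subseteq> inner_nbhd F r" by blast
qed

lemma Op_mult_ind_eq_on_inner_nbhd:
  assumes kr: "\<And>x y. dist x y > r \<Longrightarrow> k x y = 0" and x: "x \<in> inner_nbhd F r"
  shows "Op M k (mult_ind F f) x = Op M k f x"
  unfolding Op_def mult_ind_def
proof (rule Bochner_Integration.integral_cong[OF refl])
  fix y
  show "k x y * (indicator F y * f y) = k x y * f y"
    using cball_subset_of_mem_inner_nbhd[OF x] kr[of x y] by (cases "dist x y \<le> r") auto
qed

lemma Op_mult_ind_inner_nbhd_eq_0:
  assumes kr: "\<And>x y. dist x y > r \<Longrightarrow> k x y = 0" and x: "x \<notin> F"
  shows "Op M k (mult_ind (inner_nbhd F r) f) x = 0"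
proof -
  have integrand: "k x y * (indicator (inner_nbhd F r) y * f y) = 0" for y
  proof (cases "y \<in> inner_nbhd F r \<and> dist x y \<le> r")
    case True
    then have "x \<in> F" using cball_subset_of_mem_inner_nbhd[of y F r] by (auto simp: dist_commute)
    with x show ?thesis by simp
  next
    case False
    then show ?thesis using kr[of x y] by auto
  qed
  then show ?thesis unfolding Op_def mult_ind_def by (simp only: integrand) simp
qed

definition finite_propagation_approximable ::
    "'a::metric_space measure \<Rightarrow> (('a \<Rightarrow> complex) \<Rightarrow> ('a \<Rightarrow> complex)) \<Rightarrow> bool" where
  "finite_propagation_approximable M T \<longleftrightarrow>
     (\<forall>e>0. \<exists>k r. r > 0 \<and> (\<forall>x y. dist x y > r \<longrightarrow> k x y = 0) \<and>
        op_bound M (\<lambda>f x. T f x - Op M k f x) e)"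

lemma E_alg_imp_finite_propagation_approximable:
  assumes "T \<in> E_alg M"
  shows "finite_propagation_approximable M T"
  unfolding finite_propagation_approximable_def
proof (intro allI impI)
  fix e :: real assume "e > 0"
  then obtain k where "good_kernel k" and kT: "op_bound M (\<lambda>f x. T f x - Op M k f x) e"
    using assms unfolding E_alg_def by blast
  then obtain r where kr: "\<forall>x y. dist x y > r \<longrightarrow> k x y = 0"
    unfolding good_kernel_def controlled_kernel_def by blast
  have "\<forall>x y. dist x y > max r 1 \<longrightarrow> k x y = 0" using kr by simp
  then show "\<exists>k r. r > 0 \<and> (\<forall>x y. dist x y > r \<longrightarrow> k x y = 0) \<and> op_bound M (\<lambda>f x. T f x - Op M k f x) e"
    using kT by (intro exI[of _ k] exI[of _ "max r 1"]) simp
qed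

lemma E_alg_imp_op_bound:
  fixes M :: "'a::metric_space measure"
  assumes M: "sets M = sets borel" and sf: "sigma_finite_measure M"
    and D: "countable (D :: 'a set)" "\<And>x e. e > 0 \<Longrightarrow> \<exists>d\<in>D. dist x d < e"
    and balls: "\<And>r. r > 0 \<Longrightarrow> (SUP x. emeasure M (cball x r)) < \<infinity>"
    and "T \<in> E_alg M"
  obtains c where "0 \<le> c" "op_bound M T c"
proof -
  have "\<exists>k. good_kernel k \<and> op_bound M (\<lambda>f x. T f x - Op M k f x) 1"
    using \<open>T \<in> E_alg M\<close> unfolding E_alg_def by simp
  then obtain k where "good_kernel k" and kT: "op_bound M (\<lambda>f x. T f x - Op M k f x) 1"
    by blast
  then obtain B r where kB: "\<And>x y. cmod (k x y) \<le> B"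
    and kc: "uniformly_continuous_on UNIV (\<lambda>(x, y). k x y)"
    and kr0: "\<And>x y. dist x y > r \<Longrightarrow> k x y = 0"
    unfolding good_kernel_def controlled_kernel_def by blast
  have kr: "\<And>x y. dist x y > max r 1 \<Longrightarrow> k x y = 0" using kr0 by simp
  define S where "S = enn2real (SUP x. emeasure M (cball x (max r 1)))"
  have "(SUP x. emeasure M (cball x (max r 1))) < \<infinity>" using balls by simp
  then have "emeasure M (cball x (max r 1)) \<le> ennreal S" for x
    unfolding S_def by (subst ennreal_enn2real) (auto intro: SUP_upper)
  moreover have "0 \<le> B" using norm_ge_zero[of "k undefined undefined"] kB by (rule order_trans)
  moreover have "0 \<le> S" unfolding S_def by simp
  ultimately have "op_bound M (Op M k) (B * S)" "0 \<le> B * S"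
    using op_bound_Op[where r = "max r 1", OF M sf D kB uniformly_continuous_imp_continuous[OF kc] kr]
    by simp_all
  moreover from op_bound_add[OF kT this(1)] have "op_bound M T (1 + B * S)" by simp
  ultimately show thesis by (intro that[of "1 + B * S"]) simp_all
qed

lemma cINF_le_cINF_if_approx:
  fixes a b :: "'i \<Rightarrow> real"
  assumes "I \<noteq> {}" and "bdd_below (a ` I)"
    and approx: "\<And>i e. i \<in> I \<Longrightarrow> e > 0 \<Longrightarrow> \<exists>j\<in>I. a j \<le> b i + e"
  shows "(INF i\<in>I. a i) \<le> (INF i\<in>I. b i)"
proof (rule cINF_greatest[OF \<open>I \<noteq> {}\<close>])
  fix i assume "i \<in> I"
  show "(INF i\<in>I. a i) \<le> b i"
  proof (rule field_le_epsilon)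
    fix e :: real assume "e > 0"
    then obtain j where "j \<in> I" "a j \<le> b i + e" using approx \<open>i \<in> I\<close> by blast
    then show "(INF i\<in>I. a i) \<le> b i + e"
      using cINF_lower[OF \<open>bdd_below (a ` I)\<close> \<open>j \<in> I\<close>] by linarith
  qed
qed

lemma opnorm_mult_ind_inner_nbhd_left_le:
  fixes M :: "'a::metric_space measure"
  assumes M: "sets M = sets borel" and T: "op_bound M T c" "0 \<le> c"
    and kT: "op_bound M (\<lambda>f x. T f x - Op M k f x) e" "0 \<le> e"
    and kr: "\<And>x y. dist x y > r \<Longrightarrow> k x y = 0" and F: "F \<in> sets M"
  shows "opnorm M (\<lambda>f. mult_ind (inner_nbhd F r) (T f)) \<le> opnorm M (\<lambda>f. T (mult_ind F f)) + 2 * e"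
proof -
  define G where "G = inner_nbhd F r"
  have G: "G \<in> sets M" using M borel_open[OF open_inner_nbhd] by (simp add: G_def)
  have TF: "op_bound M (\<lambda>f. T (mult_ind F f)) c" using T F by (rule op_bound_mult_ind_right)
  have "(\<lambda>f x. mult_ind G (T f) x - mult_ind G (T (mult_ind F f)) x)
      = (\<lambda>f x. mult_ind G (\<lambda>x. T f x - Op M k f x) x
               - mult_ind G (\<lambda>x. T (mult_ind F f) x - Op M k (mult_ind F f) x) x)"
    unfolding G_def
    by (auto simp: fun_eq_iff mult_ind_def[of "inner_nbhd F r"] Op_mult_ind_eq_on_inner_nbhd[OF kr]
        split: split_indicator)
  moreover have "op_bound M \<dots> (e + e)"
    using op_bound_diff[OF op_bound_mult_ind_left[OF kT(1) G]
        op_bound_mult_ind_left[OF op_bound_mult_ind_right[OF kT F] G]] .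
  ultimately have "opnorm M (\<lambda>f. mult_ind G (T f)) \<le> opnorm M (\<lambda>f. mult_ind G (T (mult_ind F f))) + (e + e)"
    using opnorm_le_opnorm_add[OF _ op_bound_mult_ind_left[OF TF G]] kT(2) by simp
  also have "opnorm M (\<lambda>f. mult_ind G (T (mult_ind F f))) \<le> opnorm M (\<lambda>f. T (mult_ind F f))"
    using TF G by (rule opnorm_mult_ind_left_le)
  finally show ?thesis unfolding G_def by simp
qed

lemma opnorm_mult_ind_inner_nbhd_right_le:
  fixes M :: "'a::metric_space measure"
  assumes M: "sets M = sets borel" and T: "op_bound M T c" "0 \<le> c"
    and kT: "op_bound M (\<lambda>f x. T f x - Op M k f x) e" "0 \<le> e"
    and kr: "\<And>x y. dist x y > r \<Longrightarrow> k x y = 0" and F: "F \<in> sets M"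
  shows "opnorm M (\<lambda>f. T (mult_ind (inner_nbhd F r) f)) \<le> opnorm M (\<lambda>f. mult_ind F (T f)) + e"
proof -
  define G where "G = inner_nbhd F r"
  have G: "G \<in> sets M" using M borel_open[OF open_inner_nbhd] by (simp add: G_def)
  have "- F \<in> sets M" using M F by simp
  have FT: "op_bound M (\<lambda>f. mult_ind F (T f)) c" using T(1) F by (rule op_bound_mult_ind_left)
  have "(\<lambda>f x. T (mult_ind G f) x - mult_ind F (T (mult_ind G f)) x)
      = (\<lambda>f. mult_ind (- F) (\<lambda>x. T (mult_ind G f) x - Op M k (mult_ind G f) x))"
    unfolding G_def
    by (auto simp: fun_eq_iff mult_ind_def[of F] mult_ind_def[of "- F"] Op_mult_ind_inner_nbhd_eq_0[OF kr]
        split: split_indicator)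
  moreover have "op_bound M \<dots> e"
    using op_bound_mult_ind_left[OF op_bound_mult_ind_right[OF kT G] \<open>- F \<in> sets M\<close>] .
  ultimately have "opnorm M (\<lambda>f. T (mult_ind G f)) \<le> opnorm M (\<lambda>f. mult_ind F (T (mult_ind G f))) + e"
    using opnorm_le_opnorm_add[OF _ op_bound_mult_ind_right[OF FT T(2) G]] kT(2) by simp
  also have "opnorm M (\<lambda>f. mult_ind F (T (mult_ind G f))) \<le> opnorm M (\<lambda>f. mult_ind F (T f))"
    using FT G by (rule opnorm_mult_ind_right_le)
  finally show ?thesis unfolding G_def by simp
qed

lemma coarse_filter_inner_nbhd_mem:
  assumes "coarse_filter \<xi>" and "sets M = sets borel" and "F \<in> \<xi>" and "r > 0"
  shows "inner_nbhd F r \<in> {F \<in> \<xi>. F \<in> sets M}"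
proof -
  have "inner_nbhd F r \<in> \<xi>" using assms(1,3,4) unfolding coarse_filter_def by simp
  moreover have "inner_nbhd F r \<in> sets M" using assms(2) borel_open[OF open_inner_nbhd] by simp
  ultimately show ?thesis by simp
qed

lemma coarse_filter_measurable_nonempty:
  assumes "coarse_filter \<xi>" and "sets M = sets borel"
  shows "{F \<in> \<xi>. F \<in> sets M} \<noteq> {}"
proof -
  have "\<xi> \<noteq> {}" using assms(1) unfolding coarse_filter_def set_filter_def by (elim conjE)
  then obtain F where "F \<in> \<xi>" by auto
  then show ?thesis using coarse_filter_inner_nbhd_mem[OF assms _ zero_less_one] by blast
qed

lemma INF_opnorm_mult_ind_left_le:
  fixes M :: "'a::metric_space measure"
  assumes M: "sets M = sets borel" and T: "op_bound M T c" "0 \<le> c"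
    and approx: "finite_propagation_approximable M T" and \<xi>: "coarse_filter \<xi>"
  shows "(INF F \<in> {F \<in> \<xi>. F \<in> sets M}. opnorm M (\<lambda>f. mult_ind F (T f)))
       \<le> (INF F \<in> {F \<in> \<xi>. F \<in> sets M}. opnorm M (\<lambda>f. T (mult_ind F f)))"
proof (rule cINF_le_cINF_if_approx)
  show "{F \<in> \<xi>. F \<in> sets M} \<noteq> {}" using \<xi> M by (rule coarse_filter_measurable_nonempty)
  show "bdd_below ((\<lambda>F. opnorm M (\<lambda>f. mult_ind F (T f))) ` {F \<in> \<xi>. F \<in> sets M})"
    by (intro bdd_belowI2[of _ 0] opnorm_nonneg[OF op_bound_mult_ind_left[OF T(1)]]) simp
  fix F and e :: real assume F: "F \<in> {F \<in> \<xi>. F \<in> sets M}" and "e > 0"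
  then have "e / 2 > 0" by simp
  then obtain k r where "r > 0" and kr: "\<forall>x y. dist x y > r \<longrightarrow> k x y = 0"
    and kT: "op_bound M (\<lambda>f x. T f x - Op M k f x) (e / 2)"
    using approx unfolding finite_propagation_approximable_def by blast
  have "opnorm M (\<lambda>f. mult_ind (inner_nbhd F r) (T f)) \<le> opnorm M (\<lambda>f. T (mult_ind F f)) + e"
    using opnorm_mult_ind_inner_nbhd_left_le[OF M T kT _ kr[rule_format]] F \<open>e > 0\<close> by simp
  then show "\<exists>G\<in>{F \<in> \<xi>. F \<in> sets M}.
      opnorm M (\<lambda>f. mult_ind G (T f)) \<le> opnorm M (\<lambda>f. T (mult_ind F f)) + e"
    using coarse_filter_inner_nbhd_mem[OF \<xi> M _ \<open>r > 0\<close>] F by blast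
qed

lemma INF_opnorm_mult_ind_right_le:
  fixes M :: "'a::metric_space measure"
  assumes M: "sets M = sets borel" and T: "op_bound M T c" "0 \<le> c"
    and approx: "finite_propagation_approximable M T" and \<xi>: "coarse_filter \<xi>"
  shows "(INF F \<in> {F \<in> \<xi>. F \<in> sets M}. opnorm M (\<lambda>f. T (mult_ind F f)))
       \<le> (INF F \<in> {F \<in> \<xi>. F \<in> sets M}. opnorm M (\<lambda>f. mult_ind F (T f)))"
proof (rule cINF_le_cINF_if_approx)
  show "{F \<in> \<xi>. F \<in> sets M} \<noteq> {}" using \<xi> M by (rule coarse_filter_measurable_nonempty)
  show "bdd_below ((\<lambda>F. opnorm M (\<lambda>f. T (mult_ind F f))) ` {F \<in> \<xi>. F \<in> sets M})"
    by (intro bdd_belowI2[of _ 0] opnorm_nonneg[OF op_bound_mult_ind_right[OF T]]) simp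
  fix F and e :: real assume F: "F \<in> {F \<in> \<xi>. F \<in> sets M}" and "e > 0"
  then obtain k r where "r > 0" and kr: "\<forall>x y. dist x y > r \<longrightarrow> k x y = 0"
    and kT: "op_bound M (\<lambda>f x. T f x - Op M k f x) e"
    using approx unfolding finite_propagation_approximable_def by blast
  have "opnorm M (\<lambda>f. T (mult_ind (inner_nbhd F r) f)) \<le> opnorm M (\<lambda>f. mult_ind F (T f)) + e"
    using opnorm_mult_ind_inner_nbhd_right_le[OF M T kT _ kr[rule_format]] F \<open>e > 0\<close> by simp
  then show "\<exists>G\<in>{F \<in> \<xi>. F \<in> sets M}.
      opnorm M (\<lambda>f. T (mult_ind G f)) \<le> opnorm M (\<lambda>f. mult_ind F (T f)) + e"
    using coarse_filter_inner_nbhd_mem[OF \<xi> M _ \<open>r > 0\<close>] F by blast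
qed

theorem lemma5p1:
  fixes M :: "'a::metric_space measure"
    and T :: "('a \<Rightarrow> complex) \<Rightarrow> ('a \<Rightarrow> complex)"
    and \<xi> :: "'a set set"
  assumes proper: "\<forall>(x::'a) r. compact (cball x r)"
    and noncompact: "\<not> compact (UNIV :: 'a set)"
    and radon: "radon_measure M"
    and support: "full_support M"
    and balls_pos: "\<forall>x r. r > 0 \<longrightarrow> emeasure M (cball x r) > 0"
    and balls_unif: "\<forall>r>0. (SUP x. emeasure M (cball x r)) < \<infinity>"
    and T_in: "T \<in> E_alg M"
    and coarse: "coarse_filter \<xi>"
  shows "(INF F \<in> {F \<in> \<xi>. F \<in> sets M}. opnorm M (\<lambda>f. mult_ind F (T f)))
       = (INF F \<in> {F \<in> \<xi>. F \<in> sets M}. opnorm M (\<lambda>f. T (mult_ind F f)))"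
proof -
  \<comment> \<open>\<open>noncompact\<close>, \<open>support\<close> and \<open>balls_pos\<close> are standing assumptions not needed here.\<close>
  have M: "sets M = sets borel" and fin: "\<And>K. compact K \<Longrightarrow> emeasure M K < \<infinity>"
    using radon unfolding radon_measure_def by auto
  have sf: "sigma_finite_measure M"
    using sigma_finite_measure_if_cballs_finite[OF M fin[OF proper[rule_format]]] .
  obtain D :: "'a set" where D: "countable D" "\<And>x e. e > 0 \<Longrightarrow> \<exists>d\<in>D. dist x d < e"
    using proper_imp_countable_dense[OF proper[rule_format]] by blast
  obtain c where "0 \<le> c" "op_bound M T c"
    using E_alg_imp_op_bound[OF M sf D _ T_in] balls_unif by blast
  moreover have "finite_propagation_approximable M T"
    using T_in by (rule E_alg_imp_finite_propagation_approximable)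
  ultimately show ?thesis
    using INF_opnorm_mult_ind_left_le[OF M] INF_opnorm_mult_ind_right_le[OF M] coarse
    by (meson antisym)
qed

end
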